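(* Let $R=\{u\in L:(u,u)=2\}$. Then $W(x)=\{\alpha x+\beta y+\gamma z\in R:\alpha\equiv1,\ \beta\equiv0,\ \gamma\equiv0 \pmod 2\}$, $W(y)=\{\alpha x+\beta y+\gamma z\in R:\beta\equiv1,\ \alpha\equiv0,\ \gamma\equiv0 \pmod 2\}$, $W(z)=\{\alpha x+\beta y+\gamma z\in R:\gamma\equiv1,\ \alpha\equiv0,\ \beta\equiv0 \pmod 2\}$.
   Context: $\mathbb F$ is a field of characteristic zero, $\mathfrak{sl}_2$ the Lie algebra of $2\times2$ trace-zero matrices over $\mathbb F$ with trace form $(u,v)=\mathrm{tr}(uv)$. Equitable basis: $x=\begin{pmatrix}1&0\\0&-1\end{pmatrix}$, $y=\begin{pmatrix}-1&2\\0&1\end{pmatrix}$, $z=\begin{pmatrix}-1&0\\-2&1\end{pmatrix}$, $L=\mathbb Zx\oplus\mathbb Zy\oplus\mathbb Zz$. For $u\in\{x,y,z\}$, $r_u(v)=v-(u,v)u$, and $W=\langle r_x,r_y,r_z\rangle$ (the Weyl group of the Kac–Moody algebra with Cartan matrix having $2$ on the diagonal and $-2$ off the diagonal, whose set of real roots equals $R$). $W(u)$ denotes the $W$-orbit of $u$. *)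

theory Defs
  imports "HOL-Analysis.Analysis"
begin

definition tr2 :: "'a::comm_ring_1^2^2 \<Rightarrow> 'a" where
  "tr2 A = A$1$1 + A$2$2"

definition sl2 :: "('a::comm_ring_1^2^2) set" where
  "sl2 = {A. tr2 A = 0}"

definition tform :: "'a::comm_ring_1^2^2 \<Rightarrow> 'a^2^2 \<Rightarrow> 'a" where
  "tform u v = tr2 (u ** v)"

definition ex :: "'a::comm_ring_1^2^2" where
  "ex = (\<chi> i j. if i = 1 \<and> j = 1 then 1 else if i = 2 \<and> j = 2 then -1 else 0)"

definition ey :: "'a::comm_ring_1^2^2" where
  "ey = (\<chi> i j. if i = 1 \<and> j = 1 then -1 else if i = 1 \<and> j = 2 then 2
               else if i = 2 \<and> j = 2 then 1 else 0)"

definition ez :: "'a::comm_ring_1^2^2" where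
  "ez = (\<chi> i j. if i = 1 \<and> j = 1 then -1 else if i = 2 \<and> j = 1 then -2
               else if i = 2 \<and> j = 2 then 1 else 0)"

definition icomb :: "int \<Rightarrow> int \<Rightarrow> int \<Rightarrow> 'a::comm_ring_1^2^2" where
  "icomb \<alpha> \<beta> \<gamma> = (\<chi> i j. of_int \<alpha> * ex$i$j + of_int \<beta> * ey$i$j + of_int \<gamma> * ez$i$j)"

definition Lat :: "('a::comm_ring_1^2^2) set" where
  "Lat = {icomb \<alpha> \<beta> \<gamma> | \<alpha> \<beta> \<gamma>. True}"

definition Roots :: "('a::comm_ring_1^2^2) set" where
  "Roots = {u \<in> Lat. tform u u = 2}"

definition refl :: "'a::comm_ring_1^2^2 \<Rightarrow> 'a^2^2 \<Rightarrow> 'a^2^2" where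
  "refl u v = (\<chi> i j. v$i$j - tform u v * u$i$j)"

text \<open>Since each
  generator is an involution, the subgroup generated coincides with the set of
  all finite composites of generators (including the identity).\<close>
inductive_set Weyl :: "('a::comm_ring_1^2^2 \<Rightarrow> 'a^2^2) set" where
  Weyl_id: "id \<in> Weyl"
| Weyl_gen: "w \<in> Weyl \<Longrightarrow> u \<in> {ex, ey, ez} \<Longrightarrow> refl u \<circ> w \<in> Weyl"

definition orbit :: "'a::comm_ring_1^2^2 \<Rightarrow> ('a^2^2) set" where
  "orbit u = {w u | w. w \<in> Weyl}"

end

theory Submission imports Defs begin

(* Write every element of the lattice L as icomb a b c = a x + b y + c z.
   The trace form gives (u,u) = 2 qf(a,b,c) with qf a b c = a^2+b^2+c^2-2ab-2bc-2ca,
   so R corresponds to the integer solutions of qf = 1.  In these coordinates the three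
   generating reflections replace one coordinate, e.g. r_x : a |-> 2b+2c-a.
   (1) Invariance: every element of W preserves qf and the parities of a, b, c, so
       W(x), W(y), W(z) lie in the parity classes claimed.
   (2) Descent: if qf a b c = 1 and at least two coordinates are nonzero, then all
       coordinates have the same sign and (up to sign) the largest one exceeds the sum of
       the other two; reflecting that coordinate strictly decreases a^2+b^2+c^2.
       By induction on a^2+b^2+c^2 every root is therefore W-conjugate to one of
       +-x, +-y, +-z, i.e. lies in the orbit of the basis vector of its parity class. *)

lemma mat2_eq_iff:
  "(A::'a^2^2) = B \<longleftrightarrow> A$1$1 = B$1$1 \<and> A$1$2 = B$1$2 \<and> A$2$1 = B$2$1 \<and> A$2$2 = B$2$2"
  by (auto simp: vec_eq_iff forall_2)

lemma icomb_entries: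
  "(icomb a b c :: 'a::comm_ring_1^2^2)$1$1 = of_int (a - b - c)"
  "(icomb a b c :: 'a::comm_ring_1^2^2)$1$2 = of_int (2*b)"
  "(icomb a b c :: 'a::comm_ring_1^2^2)$2$1 = of_int (-2*c)"
  "(icomb a b c :: 'a::comm_ring_1^2^2)$2$2 = of_int (b + c - a)"
  by (simp_all add: icomb_def ex_def ey_def ez_def algebra_simps)

lemma basis_icomb:
  "ex = (icomb 1 0 0 :: 'a::comm_ring_1^2^2)"
  "ey = (icomb 0 1 0 :: 'a::comm_ring_1^2^2)"
  "ez = (icomb 0 0 1 :: 'a::comm_ring_1^2^2)"
  unfolding mat2_eq_iff icomb_entries by (simp_all add: ex_def ey_def ez_def)

lemma tform_icomb:
  "tform (icomb a b c :: 'a::comm_ring_1^2^2) (icomb a' b' c') =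
   of_int (2*a*a' + 2*b*b' + 2*c*c' - 2*(a*b'+a'*b) - 2*(b*c'+b'*c) - 2*(a*c'+a'*c))"
proof -
  have "tform (icomb a b c :: 'a^2^2) (icomb a' b' c') =
     of_int ((a-b-c)*(a'-b'-c') + (2*b)*(-2*c') + ((-2*c)*(2*b') + (b+c-a)*(b'+c'-a')))"
    unfolding tform_def tr2_def matrix_matrix_mult_def
    by (simp add: sum_2 icomb_entries algebra_simps)
  also have "\<dots> = of_int (2*a*a' + 2*b*b' + 2*c*c' - 2*(a*b'+a'*b) - 2*(b*c'+b'*c) - 2*(a*c'+a'*c))"
    by (rule arg_cong[where f=of_int]) algebra
  finally show ?thesis .
qed

text \<open>Half the norm form (u,u) in coordinates.\<close>
definition qf :: "int \<Rightarrow> int \<Rightarrow> int \<Rightarrow> int" where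
  "qf a b c = a^2 + b^2 + c^2 - 2*a*b - 2*b*c - 2*c*a"

lemma Roots_icomb: "(icomb a b c :: 'a::field_char_0^2^2) \<in> Roots \<longleftrightarrow> qf a b c = 1"
proof -
  have "tform (icomb a b c :: 'a^2^2) (icomb a b c) = of_int (2 * qf a b c)"
    unfolding tform_icomb qf_def by (rule arg_cong[where f=of_int]) algebra
  moreover have "(icomb a b c :: 'a^2^2) \<in> Lat" unfolding Lat_def by blast
  moreover have "(of_int (2 * qf a b c) :: 'a) = 2 \<longleftrightarrow> qf a b c = 1"
    by (metis of_int_eq_iff of_int_numeral mult_cancel_left1 mult.commute
        mult_2_right numeral_Bit0 numeral_One zero_neq_numeral)
  ultimately show ?thesis by (simp add: Roots_def)
qed

lemma refl_basis:
  "refl ex (icomb a b c :: 'a::comm_ring_1^2^2) = icomb (2*b+2*c-a) b c"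
  "refl ey (icomb a b c :: 'a::comm_ring_1^2^2) = icomb a (2*a+2*c-b) c"
  "refl ez (icomb a b c :: 'a::comm_ring_1^2^2) = icomb a b (2*a+2*b-c)"
  unfolding basis_icomb mat2_eq_iff refl_def tform_icomb
  by (simp_all add: icomb_entries algebra_simps)

lemma qf_reflect:
  "qf (2*b+2*c-a) b c = qf a b c" "qf a (2*a+2*c-b) c = qf a b c" "qf a b (2*a+2*b-c) = qf a b c"
  unfolding qf_def by algebra+

lemma parity_reflect: "(2*b+2*c-a) mod 2 = (a::int) mod 2"
  by presburger

lemma Weyl_invariants:
  assumes "w \<in> Weyl"
  shows "\<exists>a' b' c'. w (icomb a b c :: 'a::comm_ring_1^2^2) = icomb a' b' c' \<and> qf a' b' c' = qf a b c
           \<and> a' mod 2 = a mod 2 \<and> b' mod 2 = b mod 2 \<and> c' mod 2 = c mod 2"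
  using assms
proof (induction w rule: Weyl.induct)
  case Weyl_id
  then show ?case by auto
next
  case (Weyl_gen w u)
  then obtain a' b' c' where w: "w (icomb a b c :: 'a^2^2) = icomb a' b' c'"
    "qf a' b' c' = qf a b c" "a' mod 2 = a mod 2" "b' mod 2 = b mod 2" "c' mod 2 = c mod 2"
    by blast
  from \<open>u \<in> {ex, ey, ez}\<close> consider "u = ex" | "u = ey" | "u = ez" by blast
  then show ?case
  proof cases
    case 1 then show ?thesis
      using w qf_reflect(1)[of b' c' a'] parity_reflect[of b' c' a'] by (auto simp: refl_basis)
  next
    case 2 then show ?thesis
      using w qf_reflect(2)[of a' c' b'] parity_reflect[of a' c' b'] by (auto simp: refl_basis)
  next
    case 3 then show ?thesis
      using w qf_reflect(3)[of a' b' c'] parity_reflect[of a' b' c'] by (auto simp: refl_basis)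
  qed
qed

text \<open>On a root, any two coordinates have product at least zero, since
  4bc = (a-b-c)^2 - 1 and similarly for the other pairs.\<close>
lemma qf_one_products_nonneg:
  assumes "qf a b c = 1"
  shows "0 \<le> b*c" "0 \<le> a*c" "0 \<le> a*b"
proof -
  have "4*(b*c) = (a-b-c)^2 - 1" "4*(a*c) = (b-a-c)^2 - 1" "4*(a*b) = (c-a-b)^2 - 1"
    using assms unfolding qf_def by algebra+
  moreover have "(a-b-c)^2 \<ge> 1 \<or> a-b-c = 0" "(b-a-c)^2 \<ge> 1 \<or> b-a-c = 0"
    "(c-a-b)^2 \<ge> 1 \<or> c-a-b = 0"
    by (auto simp: power2_eq_square int_one_le_iff_zero_less zero_less_mult_iff)
  ultimately show "0 \<le> b*c" "0 \<le> a*c" "0 \<le> a*b" by auto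
qed

text \<open>For a nonnegative root whose largest coordinate a is not the only nonzero one,
  a exceeds the sum of the other two: (b+c-a)^2 = 1 + 4bc rules out 0 <= b+c-a <= min b c.\<close>
lemma largest_exceeds_sum:
  fixes a b c :: int
  assumes "0 \<le> b" "0 \<le> c" "b \<le> a" "c \<le> a" "qf a b c = 1" "b \<noteq> 0 \<or> c \<noteq> 0"
  shows "b + c < a"
proof (rule ccontr)
  assume "\<not> b + c < a"
  then have "0 \<le> b+c-a" "b+c-a \<le> b" "b+c-a \<le> c" using assms by auto
  then have "(b+c-a)*(b+c-a) \<le> b*c" by (intro mult_mono) auto
  moreover have "(b+c-a)^2 = 1 + 4*b*c" using assms(5) unfolding qf_def by algebra
  moreover have "0 \<le> b*c" using assms by simp
  ultimately show False by (simp add: power2_eq_square)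
qed

lemma qf_symmetric:
  "qf a b c = qf b a c" "qf a b c = qf c b a" "qf (-a) (-b) (-c) = qf a b c"
  unfolding qf_def by algebra+

text \<open>Reflecting coordinate a changes a^2 by 4(b+c)(b+c-a); on a root with at least two
  nonzero coordinates one of the three reflections makes this negative.\<close>
lemma descent_nonneg:
  fixes a b c :: int
  assumes "0 \<le> a" "0 \<le> b" "0 \<le> c" "qf a b c = 1"
    and "\<not> ((b=0 \<and> c=0) \<or> (a=0 \<and> c=0) \<or> (a=0 \<and> b=0))"
  shows "(b+c)*(b+c-a) < 0 \<or> (a+c)*(a+c-b) < 0 \<or> (a+b)*(a+b-c) < 0"
proof -
  consider "b \<le> a \<and> c \<le> a" | "a \<le> b \<and> c \<le> b" | "a \<le> c \<and> b \<le> c" by linarith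
  then show ?thesis
  proof cases
    case 1 then show ?thesis
      using largest_exceeds_sum[of b c a] assms by (auto simp: mult_pos_neg)
  next
    case 2 then show ?thesis
      using largest_exceeds_sum[of a c b] assms qf_symmetric(1) by (auto simp: mult_pos_neg)
  next
    case 3 then show ?thesis
      using largest_exceeds_sum[of b a c] assms qf_symmetric(1,2) by (auto simp: mult_pos_neg)
  qed
qed

lemma descent:
  fixes a b c :: int
  assumes "qf a b c = 1" and "\<not> ((b=0 \<and> c=0) \<or> (a=0 \<and> c=0) \<or> (a=0 \<and> b=0))"
  shows "(b+c)*(b+c-a) < 0 \<or> (a+c)*(a+c-b) < 0 \<or> (a+b)*(a+b-c) < 0"
proof -
  note products = qf_one_products_nonneg[OF assms(1)]
  consider "0 \<le> a \<and> 0 \<le> b \<and> 0 \<le> c" | "a \<le> 0 \<and> b \<le> 0 \<and> c \<le> 0"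
    using products by (auto simp: zero_le_mult_iff)
  then show ?thesis
  proof cases
    case 1 then show ?thesis using descent_nonneg assms by blast
  next
    case 2
    then have "((-b)+(-c))*((-b)+(-c)-(-a)) < 0 \<or> ((-a)+(-c))*((-a)+(-c)-(-b)) < 0
               \<or> ((-a)+(-b))*((-a)+(-b)-(-c)) < 0"
      using descent_nonneg[of "-a" "-b" "-c"] assms qf_symmetric(3) by auto
    then show ?thesis by (simp add: algebra_simps)
  qed
qed

lemma descent_step:
  fixes a b c :: int
  assumes "qf a b c = 1" and "\<not> ((b=0 \<and> c=0) \<or> (a=0 \<and> c=0) \<or> (a=0 \<and> b=0))"
  shows "\<exists>g a' b' c'. g \<in> {ex, ey, ez} \<and> refl g (icomb a' b' c' :: 'a::comm_ring_1^2^2) = icomb a b c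
           \<and> qf a' b' c' = 1 \<and> a' mod 2 = a mod 2 \<and> b' mod 2 = b mod 2 \<and> c' mod 2 = c mod 2
           \<and> a'^2 + b'^2 + c'^2 < a^2 + b^2 + c^2"
proof -
  have "(2*b+2*c-a)^2 - a^2 = 4*((b+c)*(b+c-a))" "(2*a+2*c-b)^2 - b^2 = 4*((a+c)*(a+c-b))"
    "(2*a+2*b-c)^2 - c^2 = 4*((a+b)*(a+b-c))" by algebra+
  moreover note descent[OF assms] qf_reflect parity_reflect
  moreover have "refl ex (icomb (2*b+2*c-a) b c :: 'a^2^2) = icomb a b c"
    "refl ey (icomb a (2*a+2*c-b) c :: 'a^2^2) = icomb a b c"
    "refl ez (icomb a b (2*a+2*b-c) :: 'a^2^2) = icomb a b c"
    by (simp_all add: refl_basis)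
  ultimately show ?thesis using assms(1) by (metis insertCI add.commute add_less_cancel_left
      add_less_cancel_right diff_less_0_iff_less mult_less_0_iff zero_less_numeral)
qed

lemma orbit_self: "u \<in> orbit u"
  unfolding orbit_def using Weyl.Weyl_id by (auto intro!: exI[of _ id])

lemma orbit_reflect: "v \<in> orbit u \<Longrightarrow> g \<in> {ex, ey, ez} \<Longrightarrow> refl g v \<in> orbit u"
proof -
  assume "v \<in> orbit u" "g \<in> {ex, ey, ez}"
  then obtain w where "w \<in> Weyl" "v = w u" unfolding orbit_def by blast
  then have "refl g \<circ> w \<in> Weyl" "refl g v = (refl g \<circ> w) u"
    using \<open>g \<in> {ex, ey, ez}\<close> by (auto intro: Weyl.Weyl_gen)
  then show ?thesis unfolding orbit_def by blast
qed

lemma basis_root_reachable: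
  assumes "qf a b c = 1" and "(b=0 \<and> c=0) \<or> (a=0 \<and> c=0) \<or> (a=0 \<and> b=0)"
  shows "(icomb a b c :: 'a::comm_ring_1^2^2) \<in> orbit (icomb (a mod 2) (b mod 2) (c mod 2))"
proof -
  have unit: "t = 1 \<or> t = -1" if "t^2 = 1" for t :: int
    using that power2_eq_1_iff by blast
  have neg: "icomb (-1) 0 0 \<in> orbit (icomb 1 0 0 :: 'a^2^2)"
    "icomb 0 (-1) 0 \<in> orbit (icomb 0 1 0 :: 'a^2^2)"
    "icomb 0 0 (-1) \<in> orbit (icomb 0 0 1 :: 'a^2^2)"
    using orbit_reflect[OF orbit_self[of "icomb 1 0 0"], of ex]
      orbit_reflect[OF orbit_self[of "icomb 0 1 0"], of ey]
      orbit_reflect[OF orbit_self[of "icomb 0 0 1"], of ez]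
    by (simp_all add: refl_basis)
  from assms show ?thesis
    using unit[of a] unit[of b] unit[of c] orbit_self neg by (auto simp: qf_def)
qed

lemma root_reachable:
  assumes "qf a b c = 1"
  shows "(icomb a b c :: 'a::comm_ring_1^2^2) \<in> orbit (icomb (a mod 2) (b mod 2) (c mod 2))"
  using assms
proof (induction "nat (a^2+b^2+c^2)" arbitrary: a b c rule: less_induct)
  case less
  show ?case
  proof (cases "(b=0 \<and> c=0) \<or> (a=0 \<and> c=0) \<or> (a=0 \<and> b=0)")
    case True
    then show ?thesis using basis_root_reachable less.prems by blast
  next
    case False
    then obtain g a' b' c' where step: "g \<in> {ex, ey, ez}"
      "refl g (icomb a' b' c' :: 'a^2^2) = icomb a b c" "qf a' b' c' = 1"
      "a' mod 2 = a mod 2" "b' mod 2 = b mod 2" "c' mod 2 = c mod 2"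
      "a'^2 + b'^2 + c'^2 < a^2 + b^2 + c^2"
      using descent_step[OF less.prems] by blast
    have "0 \<le> a'^2+b'^2+c'^2" by simp
    then have "nat (a'^2+b'^2+c'^2) < nat (a^2+b^2+c^2)"
      using step(7) by linarith
    then have "(icomb a' b' c' :: 'a^2^2) \<in> orbit (icomb (a mod 2) (b mod 2) (c mod 2))"
      using less.hyps step(3-6) by metis
    then show ?thesis using orbit_reflect[OF _ step(1)] step(2) by metis
  qed
qed

lemma orbit_parity_class:
  assumes "qf p q r = 1" "p mod 2 = p" "q mod 2 = q" "r mod 2 = r"
  shows "orbit (icomb p q r :: 'a::field_char_0^2^2) =
     {u. \<exists>a b c. u = icomb a b c \<and> u \<in> Roots \<and> a mod 2 = p \<and> b mod 2 = q \<and> c mod 2 = r}"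
proof (intro equalityI subsetI)
  fix u assume "u \<in> orbit (icomb p q r :: 'a^2^2)"
  then obtain w where "w \<in> Weyl" "u = w (icomb p q r)" unfolding orbit_def by blast
  then show "u \<in> {u. \<exists>a b c. u = icomb a b c \<and> u \<in> Roots \<and> a mod 2 = p \<and> b mod 2 = q \<and> c mod 2 = r}"
    using Weyl_invariants[of w p q r] assms by (auto simp: Roots_icomb) blast
next
  fix u :: "'a^2^2" assume "u \<in> {u. \<exists>a b c. u = icomb a b c \<and> u \<in> Roots \<and> a mod 2 = p \<and> b mod 2 = q \<and> c mod 2 = r}"
  then show "u \<in> orbit (icomb p q r :: 'a^2^2)"
    using root_reachable by (auto simp: Roots_icomb)
qed

theorem proposition7p12:
  shows "orbit (ex :: 'a::field_char_0^2^2) =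
           {u. \<exists>\<alpha> \<beta> \<gamma>. u = icomb \<alpha> \<beta> \<gamma> \<and> u \<in> Roots \<and> odd \<alpha> \<and> even \<beta> \<and> even \<gamma>}
      \<and> orbit (ey :: 'a^2^2) =
           {u. \<exists>\<alpha> \<beta> \<gamma>. u = icomb \<alpha> \<beta> \<gamma> \<and> u \<in> Roots \<and> odd \<beta> \<and> even \<alpha> \<and> even \<gamma>}
      \<and> orbit (ez :: 'a^2^2) =
           {u. \<exists>\<alpha> \<beta> \<gamma>. u = icomb \<alpha> \<beta> \<gamma> \<and> u \<in> Roots \<and> odd \<gamma> \<and> even \<alpha> \<and> even \<beta>}"
proof -
  have "qf 1 0 0 = 1" "qf 0 1 0 = 1" "qf 0 0 1 = 1" unfolding qf_def by simp_all
  then have classes: "orbit (ex :: 'a^2^2) = {u. \<exists>a b c. u = icomb a b c \<and> u \<in> Roots \<and> a mod 2 = 1 \<and> b mod 2 = 0 \<and> c mod 2 = 0}"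
    "orbit (ey :: 'a^2^2) = {u. \<exists>a b c. u = icomb a b c \<and> u \<in> Roots \<and> a mod 2 = 0 \<and> b mod 2 = 1 \<and> c mod 2 = 0}"
    "orbit (ez :: 'a^2^2) = {u. \<exists>a b c. u = icomb a b c \<and> u \<in> Roots \<and> a mod 2 = 0 \<and> b mod 2 = 0 \<and> c mod 2 = 1}"
    unfolding basis_icomb by (simp_all add: orbit_parity_class)
  show ?thesis
    unfolding classes odd_iff_mod_2_eq_one even_iff_mod_2_eq_zero by (auto simp: conj_ac)
qed

end
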